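(* For every integer $n\ge 0$, \[ \int_{\mathbb{Z}_p}\binom{x/2}{n}\,d\mu_q(x)=(-1)^n2^{-2n}d_{n,q}=\frac{1}{n!}\sum_{m=0}^{n}\Big(\frac12\Big)^m B_{m,q}S_1(n,m). \]
   Context: Let $p$ be a fixed odd prime, $\mathbb{Z}_p$ the $p$-adic integers, $\mathbb{C}_p$ the completion of the algebraic closure of $\mathbb{Q}_p$, with $|p|_p=1/p$. Let $q\in\mathbb{C}_p$ with $|1-q|_p<p^{-1/(p-1)}$, $[x]_q=\frac{1-q^x}{1-q}$, and $\log$ the $p$-adic logarithm. For a uniformly differentiable function $f$ on $\mathbb{Z}_p$, the $p$-adic $q$-integral is \[ \int_{\mathbb{Z}_p}f(x)\,d\mu_q(x)=\lim_{N\to\infty}\frac{1}{[p^N]_q}\sum_{x=0}^{p^N-1}f(x)q^x. \] The $q$-Bernoulli numbers $B_{n,q}$ are defined by $\frac{(q-1)+\frac{q-1}{\log q}t}{qe^t-1}=\sum_{n\ge0}B_{n,q}\frac{t^n}{n!}$. The numbers $d_{n,q}$ are defined by \[ \frac{q-1+\frac{q-1}{\log q}\cdot\frac12\log(1-4t)}{q\sqrt{1-4t}-1}=\sum_{n=0}^{\infty}d_{n,q}t^n, \] for $t\in\mathbb{C}_p$ with $|t|_p<p^{-1/(p-1)}$. $S_1(n,m)$ are the Stirling numbers of the first kind: $(x)_n=\sum_{l=0}^n S_1(n,l)x^l$ with $(x)_n=x(x-1)\cdots(x-n+1)$, $(x)_0=1$. Here $\binom{x/2}{n}=\frac{(x/2)_n}{n!}$.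 *)

theory Defs
  imports "HOL-Analysis.Analysis" "HOL-Computational_Algebra.Formal_Power_Series"
    "HOL-Computational_Algebra.Polynomial"
begin

definition vtends :: "('a::field \<Rightarrow> real) \<Rightarrow> (nat \<Rightarrow> 'a) \<Rightarrow> 'a \<Rightarrow> bool" where
  "vtends v s L \<longleftrightarrow> (\<forall>e>0. \<exists>N. \<forall>n\<ge>N. v (s n - L) < e)"

definition vcauchy :: "('a::field \<Rightarrow> real) \<Rightarrow> (nat \<Rightarrow> 'a) \<Rightarrow> bool" where
  "vcauchy v s \<longleftrightarrow> (\<forall>e>0. \<exists>N. \<forall>m\<ge>N. \<forall>n\<ge>N. v (s m - s n) < e)"

(* (K, v) is (isometrically isomorphic to) C_p with |p|_p = 1/p:
   a complete, algebraically closed, non-archimedean valued field with |p| = 1/p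
   in which the elements algebraic over Q are dense.  These properties characterize
   C_p up to isometric isomorphism. *)
definition is_Cp :: "nat \<Rightarrow> ('a::field_char_0 \<Rightarrow> real) \<Rightarrow> bool" where
  "is_Cp p v \<longleftrightarrow>
     (\<forall>x. 0 \<le> v x) \<and> (\<forall>x. v x = 0 \<longleftrightarrow> x = 0) \<and>
     (\<forall>x y. v (x * y) = v x * v y) \<and>
     (\<forall>x y. v (x + y) \<le> max (v x) (v y)) \<and>
     v (of_nat p) = 1 / real p \<and>
     (\<forall>s. vcauchy v s \<longrightarrow> (\<exists>L. vtends v s L)) \<and>
     (\<forall>P :: 'a poly. 0 < degree P \<longrightarrow> (\<exists>x. poly P x = 0)) \<and>
     (\<forall>x e. 0 < e \<longrightarrow> (\<exists>y. v (x - y) < e \<and>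
          (\<exists>P :: rat poly. P \<noteq> 0 \<and> poly (map_poly of_rat P) y = 0)))"

definition plog :: "('a::field_char_0 \<Rightarrow> real) \<Rightarrow> 'a \<Rightarrow> 'a" where
  "plog v q = (THE L. vtends v (\<lambda>N. \<Sum>k=1..N. (-1)^(k+1) * (q - 1)^k / of_nat k) L)"

definition qnum :: "'a::field \<Rightarrow> nat \<Rightarrow> 'a" where
  "qnum q x = (1 - q ^ x) / (1 - q)"

(* the p-adic q-integral of f (values on the nonnegative integers suffice) has value I *)
definition has_q_integral ::
  "nat \<Rightarrow> ('a::field_char_0 \<Rightarrow> real) \<Rightarrow> 'a \<Rightarrow> (nat \<Rightarrow> 'a) \<Rightarrow> 'a \<Rightarrow> bool" where
  "has_q_integral p v q f I \<longleftrightarrow>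
     vtends v (\<lambda>N. (1 / qnum q (p ^ N)) * (\<Sum>x<p ^ N. f x * q ^ x)) I"

definition qBernoulli_gf :: "('a::field_char_0 \<Rightarrow> real) \<Rightarrow> 'a \<Rightarrow> 'a fps" where
  "qBernoulli_gf v q =
     (fps_const (q - 1) + fps_const ((q - 1) / plog v q) * fps_X) /
     (fps_const q * fps_exp 1 - 1)"

definition qBernoulli :: "('a::field_char_0 \<Rightarrow> real) \<Rightarrow> 'a \<Rightarrow> nat \<Rightarrow> 'a" where
  "qBernoulli v q n = fact n * fps_nth (qBernoulli_gf v q) n"

definition sqrt_1m4t :: "'a::field_char_0 fps" where
  "sqrt_1m4t = Abs_fps (\<lambda>k. ((1/2) gchoose k) * (-4) ^ k)"

definition log_1m4t :: "'a::field_char_0 fps" where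
  "log_1m4t = Abs_fps (\<lambda>k. if k = 0 then 0 else - (4 ^ k) / of_nat k)"

definition d_gf :: "('a::field_char_0 \<Rightarrow> real) \<Rightarrow> 'a \<Rightarrow> 'a fps" where
  "d_gf v q =
     (fps_const (q - 1) + fps_const ((q - 1) / plog v q) * fps_const (1/2) * log_1m4t) /
     (fps_const q * sqrt_1m4t - 1)"

definition dq :: "('a::field_char_0 \<Rightarrow> real) \<Rightarrow> 'a \<Rightarrow> nat \<Rightarrow> 'a" where
  "dq v q n = fps_nth (d_gf v q) n"

definition falling_poly :: "nat \<Rightarrow> int poly" where
  "falling_poly n = (\<Prod>i<n. [:- of_nat i, 1:])"

definition Stirling1 :: "nat \<Rightarrow> nat \<Rightarrow> int" where
  "Stirling1 n l = coeff (falling_poly n) l"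

end

theory Submission
  imports Defs
begin

text \<open>
  Writing \<open>(x/2 choose n)\<close> as \<open>1/n! \<Sum>\<^sub>m S\<^sub>1(n,m) (x/2)\<^sup>m\<close> reduces the integral to the moments
  \<open>\<integral> x\<^sup>m d\<mu>\<^sub>q\<close>. Summing the geometric series \<open>\<Sum>\<^sub>x<\<^sub>M (q e\<^sup>t)\<^sup>x\<close> gives
  \<open>1/[M]\<^sub>q \<Sum>\<^sub>x<\<^sub>M x\<^sup>m q\<^sup>x = m! [t\<^sup>m] (q\<^sup>M e\<^sup>M\<^sup>t - 1)/(q\<^sup>M - 1) \<cdot> (q - 1)/(q e\<^sup>t - 1)\<close>.
  For \<open>M = p\<^sup>N\<close> the quotient \<open>(q\<^sup>M - 1)/M\<close> tends \<open>p\<close>-adically to \<open>log q\<close>, because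
  \<open>(M - 1 choose j) \<rightarrow> (-1)\<^sup>j\<close>; hence the first factor tends coefficientwise to \<open>1 + t / log q\<close> and the
  \<open>m\<close>-th moment is \<open>B\<^sub>m\<^sub>,\<^sub>q\<close>.

  The identity with \<open>d\<^sub>n\<^sub>,\<^sub>q\<close> is formal: its generating function is that of the \<open>B\<^sub>m\<^sub>,\<^sub>q\<close> composed
  with \<open>u = \<onehalf> log (1 - 4t)\<close>, and \<open>u\<close> satisfies \<open>(1 - 4t) u' = -2\<close>, from which
  \<open>e\<^sup>u = \<surd>(1 - 4t)\<close> and \<open>[t\<^sup>n] u\<^sup>m = m! 2\<^sup>-\<^sup>m S\<^sub>1(n,m) (-4)\<^sup>n / n!\<close> follow by comparing
  coefficients.
\<close>

section \<open>Stirling numbers of the first kind\<close>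

lemma falling_poly_Suc: "falling_poly (Suc n) = [:- of_nat n, 1:] * falling_poly n"
  by (simp add: falling_poly_def lessThan_Suc mult.commute)

lemma Stirling1_0_left: "Stirling1 0 m = (if m = 0 then 1 else 0)"
  by (simp add: Stirling1_def falling_poly_def)

lemma Stirling1_0_right: "Stirling1 n 0 = (if n = 0 then 1 else 0)"
  by (induction n) (simp_all add: Stirling1_def falling_poly_Suc falling_poly_def)

lemma Stirling1_Suc_Suc:
  "Stirling1 (Suc n) (Suc m) = Stirling1 n m - of_nat n * Stirling1 n (Suc m)"
  by (simp add: Stirling1_def falling_poly_Suc)

lemma Stirling1_eq_0: "n < m \<Longrightarrow> Stirling1 n m = 0"
proof (induction n arbitrary: m)
  case 0
  then show ?case by (simp add: Stirling1_0_left)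
next
  case (Suc n)
  then obtain k where "m = Suc k" "n < k" by (cases m) auto
  then show ?case using Suc.IH by (simp add: Stirling1_Suc_Suc)
qed

lemma prod_diff_of_nat_eq_sum_Stirling1:
  "(\<Prod>i<n. (y::'a::comm_ring_1) - of_nat i) = (\<Sum>m=0..n. of_int (Stirling1 n m) * y ^ m)"
proof (induction n)
  case 0
  then show ?case by (simp add: Stirling1_0_left)
next
  case (Suc n)
  define S where "S = (\<lambda>k. \<Sum>m=0..n. of_int (Stirling1 n (m + k)) * y ^ m)"
  have "S 0 = (\<Sum>m=0..Suc n. of_int (Stirling1 n m) * y ^ m)"
    using Stirling1_eq_0[of n "Suc n"] by (simp add: S_def)
  also have "\<dots> = of_int (Stirling1 n 0) + (\<Sum>m=0..n. of_int (Stirling1 n (Suc m)) * y ^ Suc m)"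
    by (subst sum.atLeast0_atMost_Suc_shift) simp
  also have "\<dots> = of_int (Stirling1 n 0) + y * S 1"
    by (simp add: S_def sum_distrib_left mult_ac)
  finally have S0: "S 0 = of_int (Stirling1 n 0) + y * S 1" .
  have "(\<Sum>m=0..Suc n. of_int (Stirling1 (Suc n) m) * y ^ m)
      = of_int (Stirling1 (Suc n) 0) + (\<Sum>m=0..n. of_int (Stirling1 (Suc n) (Suc m)) * y ^ Suc m)"
    by (subst sum.atLeast0_atMost_Suc_shift) simp
  also have "\<dots> = of_int (Stirling1 (Suc n) 0) + y * (S 0 - of_nat n * S 1)"
    by (simp add: S_def Stirling1_Suc_Suc algebra_simps sum_subtractf sum_distrib_left)
  also have "\<dots> = (y - of_nat n) * S 0"
    using S0 by (simp add: Stirling1_0_right algebra_simps)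
  finally show ?case
    using Suc.IH by (simp add: S_def lessThan_Suc mult.commute)
qed

lemma gbinomial_eq_sum_Stirling1:
  fixes y :: "'a::field_char_0"
  shows "y gchoose n = (\<Sum>m=0..n. of_int (Stirling1 n m) * y ^ m) / fact n"
  unfolding gbinomial_prod_rev prod_diff_of_nat_eq_sum_Stirling1[symmetric]
  by (simp add: atLeast0LessThan)

section \<open>Power series solving \<open>(1 - a X) F' = b F\<close>\<close>

lemma fps_nth_one_minus_X_times_deriv:
  fixes F :: "'a::comm_ring_1 fps"
  shows "fps_nth ((1 - fps_const a * fps_X) * fps_deriv F) n
           = of_nat (Suc n) * fps_nth F (Suc n) - a * of_nat n * fps_nth F n"
proof -
  have "(1 - fps_const a * fps_X) * fps_deriv F = fps_deriv F - fps_const a * (fps_X * fps_deriv F)"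
    by (simp add: algebra_simps)
  then show ?thesis
    by (cases n) (simp_all add: algebra_simps)
qed

lemma fps_linear_ode_unique:
  fixes F G :: "'a::field_char_0 fps"
  assumes "(1 - fps_const a * fps_X) * fps_deriv F = fps_const b * F"
    and "(1 - fps_const a * fps_X) * fps_deriv G = fps_const b * G"
    and "fps_nth F 0 = fps_nth G 0"
  shows "F = G"
proof (rule fps_ext)
  have rec: "of_nat (Suc n) * fps_nth H (Suc n) = (a * of_nat n + b) * fps_nth H n"
    if "(1 - fps_const a * fps_X) * fps_deriv H = fps_const b * H" for H :: "'a fps" and n
    using arg_cong[OF that, of "\<lambda>H. fps_nth H n"]
    by (simp add: fps_nth_one_minus_X_times_deriv algebra_simps del: of_nat_Suc)
  fix n
  show "fps_nth F n = fps_nth G n"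
  proof (induction n)
    case 0
    then show ?case using assms(3) .
  next
    case (Suc n)
    then have "of_nat (Suc n) * fps_nth F (Suc n) = of_nat (Suc n) * fps_nth G (Suc n)"
      using rec[OF assms(1), of n] rec[OF assms(2), of n] by simp
    then show ?case by (simp del: of_nat_Suc)
  qed
qed

text \<open>The hypotheses on \<open>u\<close> characterise \<open>u = - c log (1 - a X)\<close>.\<close>

context
  fixes u :: "'a::field_char_0 fps" and a c :: 'a
  assumes u_0: "fps_nth u 0 = 0"
    and u_ode: "(1 - fps_const a * fps_X) * fps_deriv u = fps_const (- a * c)"
begin

lemma fps_nth_power_log_series_rec:
  "of_nat (Suc n) * fps_nth (u ^ Suc k) (Suc n)
     = a * of_nat n * fps_nth (u ^ Suc k) n - a * c * of_nat (Suc k) * fps_nth (u ^ k) n"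
proof -
  have "(1 - fps_const a * fps_X) * fps_deriv (u ^ Suc k)
      = fps_const (of_nat (Suc k)) * u ^ k * ((1 - fps_const a * fps_X) * fps_deriv u)"
    by (simp only: fps_deriv_power diff_Suc_1 mult_ac)
  also have "\<dots> = fps_const (of_nat (Suc k)) * u ^ k * fps_const (- a * c)"
    by (simp only: u_ode)
  finally have "fps_nth ((1 - fps_const a * fps_X) * fps_deriv (u ^ Suc k)) n
      = - a * c * of_nat (Suc k) * fps_nth (u ^ k) n"
    by simp
  then show ?thesis
    unfolding fps_nth_one_minus_X_times_deriv by (simp add: algebra_simps)
qed

lemma fps_nth_power_log_series:
  "fps_nth (u ^ m) n = fact m * c ^ m * of_int (Stirling1 n m) * (- a) ^ n / fact n"
proof (induction n arbitrary: m)
  case 0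
  then show ?case
    by (cases m) (simp_all add: Stirling1_0_left u_0)
next
  case (Suc n)
  show ?case
  proof (cases m)
    case 0
    then show ?thesis by (simp add: Stirling1_0_right)
  next
    case (Suc k)
    have "of_nat (Suc n) * fps_nth (u ^ Suc k) (Suc n)
        = of_nat (Suc n) * (fact (Suc k) * c ^ Suc k * of_int (Stirling1 (Suc n) (Suc k))
            * (- a) ^ Suc n / fact (Suc n))"
      unfolding fps_nth_power_log_series_rec Suc.IH Stirling1_Suc_Suc
      by (simp add: field_simps del: of_nat_Suc)
    then show ?thesis
      unfolding Suc by (metis mult_cancel_left of_nat_eq_0_iff nat.distinct(1))
  qed
qed

lemma fps_exp_compose_log_series:
  "fps_exp 1 oo u = Abs_fps (\<lambda>n. (c gchoose n) * (- a) ^ n)"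
proof (rule fps_linear_ode_unique)
  have "(1 - fps_const a * fps_X) * fps_deriv (fps_exp 1 oo u)
      = (fps_exp 1 oo u) * ((1 - fps_const a * fps_X) * fps_deriv u)"
    by (simp add: fps_compose_deriv u_0 ac_simps)
  also have "\<dots> = fps_const (- a * c) * (fps_exp 1 oo u)"
    unfolding u_ode by (rule mult.commute)
  finally show "(1 - fps_const a * fps_X) * fps_deriv (fps_exp 1 oo u)
      = fps_const (- a * c) * (fps_exp 1 oo u)" .
  show "(1 - fps_const a * fps_X) * fps_deriv (Abs_fps (\<lambda>n. (c gchoose n) * (- a) ^ n))
      = fps_const (- a * c) * Abs_fps (\<lambda>n. (c gchoose n) * (- a) ^ n)"
  proof (rule fps_ext)
    fix n
    have g: "of_nat (Suc n) * (c gchoose Suc n) = (c - of_nat n) * (c gchoose n)"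
      using gbinomial_mult_1[of c n] by (simp add: algebra_simps)
    have "of_nat (Suc n) * ((c gchoose Suc n) * (- a) ^ Suc n)
        = (of_nat (Suc n) * (c gchoose Suc n)) * ((- a) * (- a) ^ n)"
      by (simp only: power_Suc mult.assoc)
    also have "\<dots> = (a * of_nat n - a * c) * ((c gchoose n) * (- a) ^ n)"
      unfolding g by (simp add: algebra_simps)
    finally show "fps_nth ((1 - fps_const a * fps_X) * fps_deriv (Abs_fps (\<lambda>n. (c gchoose n) * (- a) ^ n))) n
        = fps_nth (fps_const (- a * c) * Abs_fps (\<lambda>n. (c gchoose n) * (- a) ^ n)) n"
      unfolding fps_nth_one_minus_X_times_deriv by (simp add: algebra_simps)
  qed
qed simp

end

lemma half_log_1m4t_ode:
  "(1 - fps_const 4 * fps_X) * fps_deriv (fps_const (1/2) * log_1m4t)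
     = (fps_const (- 4 * (1/2)) :: 'a::field_char_0 fps)"
proof (rule fps_ext)
  fix n
  show "fps_nth ((1 - fps_const 4 * fps_X) * fps_deriv (fps_const (1/2) * log_1m4t)) n
      = fps_nth (fps_const (- 4 * (1/2)) :: 'a fps) n"
    unfolding fps_nth_one_minus_X_times_deriv
    by (cases n) (simp_all add: log_1m4t_def del: of_nat_Suc)
qed

lemma half_log_1m4t_0: "fps_nth (fps_const (1/2) * log_1m4t) 0 = 0"
  by (simp add: log_1m4t_def)

lemma sqrt_1m4t_eq_exp_half_log_1m4t:
  "sqrt_1m4t = (fps_exp 1 oo (fps_const (1/2) * log_1m4t) :: 'a::field_char_0 fps)"
  unfolding sqrt_1m4t_def
  by (rule fps_exp_compose_log_series[OF half_log_1m4t_0 half_log_1m4t_ode, symmetric])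

lemma d_gf_eq_qBernoulli_gf_compose:
  fixes q :: "'a::field_char_0"
  assumes "q \<noteq> 1"
  shows "d_gf v q = qBernoulli_gf v q oo (fps_const (1/2) * log_1m4t)"
proof -
  let ?u = "fps_const (1/2) * log_1m4t :: 'a fps"
  have "fps_nth (fps_const q * fps_exp 1 - 1) 0 \<noteq> 0"
    using assms by simp
  then have "qBernoulli_gf v q oo ?u
      = (fps_const (q - 1) + fps_const ((q - 1) / plog v q) * fps_X oo ?u)
        / (fps_const q * fps_exp 1 - 1 oo ?u)"
    unfolding qBernoulli_gf_def by (rule fps_divide_compose[OF half_log_1m4t_0])
  also have "\<dots> = d_gf v q"
    unfolding d_gf_def sqrt_1m4t_eq_exp_half_log_1m4t
    by (simp only: fps_compose_add_distrib fps_compose_sub_distrib fps_const_compose fps_compose_1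
        fps_compose_mult_distrib[OF half_log_1m4t_0] fps_X_fps_compose_startby0[OF half_log_1m4t_0]
        mult.assoc)
  finally show ?thesis ..
qed

lemma dq_eq_sum_qBernoulli_Stirling1:
  fixes q :: "'a::field_char_0"
  assumes "q \<noteq> 1"
  shows "dq v q n = (- 4) ^ n / fact n
           * (\<Sum>m=0..n. (1/2) ^ m * qBernoulli v q m * of_int (Stirling1 n m))"
proof -
  have "dq v q n = (\<Sum>m=0..n. fps_nth (qBernoulli_gf v q) m
                     * fps_nth ((fps_const (1/2) * log_1m4t) ^ m) n)"
    unfolding dq_def d_gf_eq_qBernoulli_gf_compose[OF assms] fps_compose_nth ..
  also have "\<dots> = (\<Sum>m=0..n. (- 4) ^ n / fact n * ((1/2) ^ m * qBernoulli v q m * of_int (Stirling1 n m)))"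
    unfolding fps_nth_power_log_series[OF half_log_1m4t_0 half_log_1m4t_ode] qBernoulli_def
    by (rule sum.cong) simp_all
  finally show ?thesis
    by (simp add: sum_distrib_left)
qed

lemma dq_scaled_eq_sum_qBernoulli_Stirling1:
  fixes q :: "'a::field_char_0"
  assumes "q \<noteq> 1"
  shows "(-1) ^ n * (1 / 2 ^ (2 * n)) * dq v q n
           = (1 / fact n) * (\<Sum>m=0..n. (1/2) ^ m * qBernoulli v q m * of_int (Stirling1 n m))"
proof -
  have "(- 4 :: 'a) ^ n = (- 1) ^ n * 2 ^ (2 * n)"
    by (simp add: power_mult flip: power_mult_distrib)
  moreover have "(- 1 :: 'a) ^ n * (- 1) ^ n = 1"
    by (simp flip: power_mult_distrib)
  ultimately have unit: "(- 1) ^ n * (1 / 2 ^ (2 * n)) * (- 4) ^ n = (1 :: 'a)"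
    by simp
  let ?S = "\<Sum>m=0..n. (1/2) ^ m * qBernoulli v q m * of_int (Stirling1 n m)"
  have "(-1) ^ n * (1 / 2 ^ (2 * n)) * dq v q n
      = ((- 1) ^ n * (1 / 2 ^ (2 * n)) * (- 4) ^ n) * (1 / fact n * ?S)"
    unfolding dq_eq_sum_qBernoulli_Stirling1[OF assms] by (simp add: field_simps)
  then show ?thesis
    unfolding unit by simp
qed

section \<open>Moments of the \<open>q\<close>-measure as power series coefficients\<close>

lemma sum_of_nat_power_mult_power_eq_fps_nth:
  fixes q :: "'a::field_char_0"
  assumes "q \<noteq> 1"
  shows "(\<Sum>x<M. of_nat x ^ m * q ^ x)
           = fact m * fps_nth ((fps_const (q ^ M) * fps_exp (of_nat M) - 1)
                                / (fps_const q * fps_exp 1 - 1)) m"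
proof -
  let ?Y = "fps_const q * fps_exp (1::'a)"
  have Y_power: "?Y ^ x = fps_const (q ^ x) * fps_exp (of_nat x)" for x
    by (simp add: power_mult_distrib fps_exp_power_mult)
  have "fps_nth (?Y - 1) 0 \<noteq> 0"
    using assms by simp
  then have "?Y - 1 \<noteq> 0"
    by (metis fps_zero_nth)
  then have geom: "(?Y ^ M - 1) / (?Y - 1) = (\<Sum>x<M. ?Y ^ x)"
    unfolding power_diff_1_eq by (rule nonzero_mult_div_cancel_left)
  have "fps_nth (\<Sum>x<M. ?Y ^ x) m = (\<Sum>x<M. of_nat x ^ m * q ^ x) / fact m"
    unfolding fps_sum_nth Y_power by (simp add: sum_divide_distrib mult.commute)
  then have "fps_nth ((?Y ^ M - 1) / (?Y - 1)) m = (\<Sum>x<M. of_nat x ^ m * q ^ x) / fact m"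
    unfolding geom .
  then show ?thesis
    unfolding Y_power by simp
qed

definition qint_kernel :: "'a::field_char_0 \<Rightarrow> nat \<Rightarrow> 'a fps" where
  "qint_kernel q M = fps_const (1 / (q ^ M - 1)) * (fps_const (q ^ M) * fps_exp (of_nat M) - 1)"

lemma qint_kernel_nth_0: "q ^ M \<noteq> 1 \<Longrightarrow> fps_nth (qint_kernel q M) 0 = 1"
  by (simp add: qint_kernel_def)

lemma qint_kernel_nth_Suc:
  "fps_nth (qint_kernel q M) (Suc j)
     = q ^ M * (of_nat M / (q ^ M - 1)) * (of_nat M ^ j * inverse (fact (Suc j)))"
proof -
  have "fps_nth (qint_kernel q M) (Suc j) = 1 / (q ^ M - 1) * (q ^ M * (of_nat M ^ Suc j / fact (Suc j)))"
    by (simp add: qint_kernel_def del: fact_Suc power_Suc)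
  then show ?thesis
    by (simp only: power_Suc divide_inverse mult_ac mult_1_left)
qed

lemma qint_sum_power_eq_fps_nth:
  fixes q :: "'a::field_char_0"
  assumes "q \<noteq> 1"
  shows "1 / qnum q M * (\<Sum>x<M. of_nat x ^ m * q ^ x)
           = fact m * fps_nth (qint_kernel q M * (fps_const (q - 1) / (fps_const q * fps_exp 1 - 1))) m"
proof -
  have D0: "fps_nth (fps_const q * fps_exp 1 - 1) 0 \<noteq> 0"
    using assms by simp
  have "fps_const ((q - 1) / (q ^ M - 1)) = fps_const (q - 1) * fps_const (1 / (q ^ M - 1))"
    by simp
  then have kernel: "qint_kernel q M * (fps_const (q - 1) / (fps_const q * fps_exp 1 - 1))
      = fps_const ((q - 1) / (q ^ M - 1))
        * ((fps_const (q ^ M) * fps_exp (of_nat M) - 1) / (fps_const q * fps_exp 1 - 1))"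
    unfolding qint_kernel_def fps_divide_unit[OF D0] by (simp only: mult_ac)
  have "1 / qnum q M = (1 - q) / (1 - q ^ M)"
    by (simp add: qnum_def)
  also have "\<dots> = (q - 1) / (q ^ M - 1)"
    by (metis minus_diff_eq minus_divide_divide)
  finally show ?thesis
    unfolding sum_of_nat_power_mult_power_eq_fps_nth[OF assms] kernel fps_mult_left_const_nth
    by (simp only: mult_ac)
qed

section \<open>Non-archimedean absolute values\<close>

locale nonarch_abs =
  fixes v :: "'a::field \<Rightarrow> real"
  assumes v_nonneg: "0 \<le> v x"
    and v_eq_0_iff: "v x = 0 \<longleftrightarrow> x = 0"
    and v_mult: "v (x * y) = v x * v y"
    and v_add_max: "v (x + y) \<le> max (v x) (v y)"
begin

lemma v_0 [simp]: "v 0 = 0"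
  using v_eq_0_iff by simp

lemma v_pos: "x \<noteq> 0 \<Longrightarrow> 0 < v x"
  using v_nonneg[of x] v_eq_0_iff[of x] by linarith

lemma v_1 [simp]: "v 1 = 1"
  using v_mult[of 1 1] v_pos[of 1] by simp

lemma v_minus [simp]: "v (- x) = v x"
proof -
  have "v (- 1) * v (- 1) = 1"
    using v_mult[of "- 1" "- 1"] by simp
  then have "(v (- 1) - 1) * (v (- 1) + 1) = 0"
    by (simp add: algebra_simps)
  then have "v (- 1) = 1"
    using v_nonneg[of "- 1"] by simp
  then show ?thesis
    using v_mult[of "- 1" x] by simp
qed

lemma v_minus_commute: "v (x - y) = v (y - x)"
  using v_minus[of "x - y"] by simp

lemma v_diff_max: "v (x - y) \<le> max (v x) (v y)"
  using v_add_max[of x "- y"] by simp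

lemma v_add_le: "v (x + y) \<le> v x + v y"
  using v_add_max[of x y] v_nonneg[of x] v_nonneg[of y] by linarith

lemma v_power: "v (x ^ n) = v x ^ n"
  by (induction n) (simp_all add: v_mult)

lemma v_inverse: "v (inverse x) = inverse (v x)"
proof (cases "x = 0")
  case False
  then have "v x * v (inverse x) = 1"
    using v_mult[of x "inverse x"] by simp
  then show ?thesis
    using inverse_unique by metis
qed simp

lemma v_divide: "v (x / y) = v x / v y"
  by (simp add: divide_inverse v_mult v_inverse)

lemma v_sum_le:
  assumes "\<And>i. i \<in> A \<Longrightarrow> v (f i) \<le> e" and "0 \<le> e"
  shows "v (sum f A) \<le> e"
  using assms
proof (induction A rule: infinite_finite_induct)
  case (insert x F)
  then have "max (v (f x)) (v (sum f F)) \<le> e"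
    by simp
  with insert.hyps show ?case
    using order_trans[OF v_add_max] by simp
qed simp_all

lemma v_of_nat_le_1: "v (of_nat n) \<le> 1"
proof (induction n)
  case (Suc n)
  then show ?case
    using v_add_max[of 1 "of_nat n"] by (simp add: add.commute)
qed simp

lemma v_of_int_le_1: "v (of_int z) \<le> 1"
  using v_of_nat_le_1[of "nat \<bar>z\<bar>"] v_minus[of "of_int z"]
  by (cases "z \<ge> 0") (simp_all add: of_nat_nat)

lemma vtends_iff: "vtends v s L \<longleftrightarrow> (\<lambda>n. v (s n - L)) \<longlonglongrightarrow> 0"
  unfolding vtends_def LIMSEQ_iff using v_nonneg by simp

lemma vtends_const: "vtends v (\<lambda>n. c) c"
  unfolding vtends_def by simp

lemma vtends_dominated:
  assumes "g \<longlonglongrightarrow> 0" and "eventually (\<lambda>n. v (s n - L) \<le> g n) sequentially"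
  shows "vtends v s L"
  unfolding vtends_iff
  by (rule Lim_null_comparison[OF _ assms(1)]) (use assms(2) in \<open>simp add: v_nonneg\<close>)

lemma vtends_eventually_eq:
  assumes "eventually (\<lambda>n. s n = t n) sequentially" and "vtends v t L"
  shows "vtends v s L"
proof (rule vtends_dominated)
  show "(\<lambda>n. v (t n - L)) \<longlonglongrightarrow> 0"
    using assms(2) unfolding vtends_iff .
  show "eventually (\<lambda>n. v (s n - L) \<le> v (t n - L)) sequentially"
    using assms(1) by eventually_elim simp
qed

lemma vtends_add:
  assumes "vtends v s L" and "vtends v t M"
  shows "vtends v (\<lambda>n. s n + t n) (L + M)"
proof (rule vtends_dominated)
  show "(\<lambda>n. v (s n - L) + v (t n - M)) \<longlonglongrightarrow> 0"
    using tendsto_add[OF assms[unfolded vtends_iff]] by simp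
  show "eventually (\<lambda>n. v (s n + t n - (L + M)) \<le> v (s n - L) + v (t n - M)) sequentially"
    using v_add_le by (simp add: add_diff_add)
qed

lemma vtends_mult:
  assumes "vtends v s L" and "vtends v t M"
  shows "vtends v (\<lambda>n. s n * t n) (L * M)"
proof (rule vtends_dominated)
  let ?g = "\<lambda>n. v (s n - L) * v (t n - M) + v L * v (t n - M) + v M * v (s n - L)"
  have "?g \<longlonglongrightarrow> 0 * 0 + v L * 0 + v M * 0"
    using assms unfolding vtends_iff by (intro tendsto_add tendsto_mult tendsto_const)
  then show "?g \<longlonglongrightarrow> 0"
    by simp
  have "v (s n * t n - L * M) \<le> ?g n" for n
  proof -
    have "s n * t n - L * M = (s n - L) * (t n - M) + L * (t n - M) + M * (s n - L)"
      by (simp add: algebra_simps)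
    then show ?thesis
      using v_add_le[of "(s n - L) * (t n - M) + L * (t n - M)" "M * (s n - L)"]
        v_add_le[of "(s n - L) * (t n - M)" "L * (t n - M)"]
      by (simp add: v_mult)
  qed
  then show "eventually (\<lambda>n. v (s n * t n - L * M) \<le> ?g n) sequentially"
    by simp
qed

lemma vtends_sum:
  assumes "\<And>i. i \<in> A \<Longrightarrow> vtends v (f i) (L i)"
  shows "vtends v (\<lambda>n. \<Sum>i\<in>A. f i n) (\<Sum>i\<in>A. L i)"
  using assms
  by (induction A rule: infinite_finite_induct) (simp_all add: vtends_const vtends_add)

lemma vtends_unique:
  assumes "vtends v s L" and "vtends v s M"
  shows "L = M"
proof -
  have lim: "(\<lambda>n. v (s n - L) + v (s n - M)) \<longlonglongrightarrow> 0"
    using tendsto_add[OF assms[unfolded vtends_iff]] by simp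
  have le: "v (L - M) \<le> v (s n - L) + v (s n - M)" for n
    using v_add_le[of "L - s n" "s n - M"] v_minus_commute[of L "s n"] by simp
  have "(\<lambda>n. v (L - M)) \<longlonglongrightarrow> 0"
    by (rule Lim_null_comparison[OF _ lim]) (simp add: le v_nonneg)
  then have "v (L - M) = 0"
    by (simp add: LIMSEQ_const_iff)
  then show ?thesis
    by (simp add: v_eq_0_iff)
qed

lemma vtends_inverse:
  assumes "vtends v s L" and "L \<noteq> 0"
  shows "vtends v (\<lambda>n. inverse (s n)) (inverse L)"
proof (rule vtends_dominated)
  have vL: "v L > 0"
    using assms(2) by (rule v_pos)
  show "(\<lambda>n. v (s n - L) * (2 / (v L * v L))) \<longlonglongrightarrow> 0"
    using assms(1) unfolding vtends_iff by (rule tendsto_mult_left_zero)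
  have "v L / 2 > 0"
    using vL by simp
  then have "eventually (\<lambda>n. v (s n - L) < v L / 2) sequentially"
    using assms(1) unfolding vtends_def eventually_sequentially by blast
  then show "eventually (\<lambda>n. v (inverse (s n) - inverse L) \<le> v (s n - L) * (2 / (v L * v L))) sequentially"
  proof eventually_elim
    case (elim n)
    have "v L \<le> v (s n) + v (L - s n)"
      using v_add_le[of "s n" "L - s n"] by simp
    then have sn: "v L / 2 \<le> v (s n)"
      using elim v_minus_commute[of L "s n"] by linarith
    then have "s n \<noteq> 0"
      using vL by auto
    then have "inverse (s n) - inverse L = (L - s n) / (s n * L)"
      using assms(2) by (simp add: field_simps)
    then have "v (inverse (s n) - inverse L) = v (s n - L) / (v (s n) * v L)"
      using v_minus_commute[of L "s n"] by (simp add: v_divide v_mult)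
    also have "\<dots> \<le> v (s n - L) / (v L / 2 * v L)"
      using sn vL v_nonneg[of "s n - L"]
      by (intro divide_left_mono mult_right_mono mult_pos_pos) simp_all
    also have "\<dots> = v (s n - L) * (2 / (v L * v L))"
      by simp
    finally show ?case .
  qed
qed

lemma vtends_imp_v_diff_le:
  assumes "vtends v s L" and "eventually (\<lambda>n. v (s n - a) \<le> r) sequentially"
  shows "v (L - a) \<le> r"
proof (rule tendsto_le[OF trivial_limit_sequentially])
  show "(\<lambda>n. v (s n - L) + r) \<longlonglongrightarrow> r"
    using tendsto_add[OF assms(1)[unfolded vtends_iff] tendsto_const[of r]] by simp
  show "eventually (\<lambda>n. v (L - a) \<le> v (s n - L) + r) sequentially"
    using assms(2)
  proof eventually_elim
    case (elim n)
    then show ?case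
      using v_add_le[of "L - s n" "s n - a"] v_minus_commute[of L "s n"] by simp
  qed
qed simp

lemma vtends_iff_eventually:
  "vtends v s L \<longleftrightarrow> (\<forall>e>0. eventually (\<lambda>n. v (s n - L) < e) sequentially)"
  unfolding vtends_def eventually_sequentially ..

lemma vtends_eventually_ne_0:
  assumes "vtends v s L" and "L \<noteq> 0"
  shows "eventually (\<lambda>n. s n \<noteq> 0) sequentially"
proof -
  have "eventually (\<lambda>n. v (s n - L) < v L) sequentially"
    using assms v_pos unfolding vtends_iff_eventually by blast
  then show ?thesis
    by eventually_elim auto
qed

lemma vtends_fps_nth_mult:
  assumes "\<And>j. j \<le> m \<Longrightarrow> vtends v (\<lambda>N. fps_nth (F N) j) (fps_nth F' j)"
  shows "vtends v (\<lambda>N. fps_nth (F N * G) m) (fps_nth (F' * G) m)"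
  unfolding fps_mult_nth using assms by (intro vtends_sum vtends_mult vtends_const) auto

end

locale padic_abs = nonarch_abs v for v :: "'a::field_char_0 \<Rightarrow> real" +
  fixes p :: nat
  assumes prime_p: "prime p"
    and v_of_nat_p: "v (of_nat p) = 1 / real p"
begin

lemma p_gt_1: "1 < p"
  using prime_p prime_gt_1_nat by blast

lemma v_of_nat_prime_power: "v (of_nat (p ^ N)) = (1 / real p) ^ N"
  by (simp add: v_power v_of_nat_p power_one_over)

lemma v_of_nat_eq_1:
  assumes "\<not> p dvd k"
  shows "v (of_nat k) = 1"
proof -
  have "gcd k p = 1"
    using prime_imp_coprime_nat[OF prime_p assms] by (simp add: coprime_commute)
  then obtain a b where ab: "a * int k + b * int p = 1"
    using bezout_int[of "int k" "int p"] by (auto simp: gcd_int_int_eq)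
  have "(1::'a) = of_int a * of_nat k + of_int b * of_nat p"
    by (metis ab of_int_1 of_int_add of_int_mult of_int_of_nat_eq)
  then have "1 \<le> max (v (of_int a * of_nat k)) (v (of_int b * of_nat p))"
    by (metis v_1 v_add_max)
  moreover have "v (of_int a * of_nat k) \<le> v (of_nat k)"
    using v_of_int_le_1[of a] v_nonneg[of "of_nat k"] v_nonneg[of "of_int a"]
    by (simp add: v_mult mult_left_le_one_le)
  moreover have "v (of_int b * of_nat p) < 1"
  proof -
    have "v (of_int b * of_nat p) \<le> 1 / real p"
      using v_of_int_le_1[of b] v_of_nat_p p_gt_1 by (simp add: v_mult divide_right_mono)
    also have "\<dots> < 1"
      using p_gt_1 by simp
    finally show ?thesis .
  qed
  ultimately show ?thesis
    using v_of_nat_le_1[of k] by linarith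
qed

lemma v_of_nat_eq_power:
  assumes "k \<ge> 1"
  shows "\<exists>e. v (of_nat k) = (1 / real p) ^ e \<and> p ^ e \<le> k"
  using assms
proof (induction k rule: less_induct)
  case (less k)
  show ?case
  proof (cases "p dvd k")
    case False
    then show ?thesis
      using v_of_nat_eq_1 less.prems by (intro exI[of _ 0]) simp
  next
    case True
    then obtain k' where k': "k = p * k'" ..
    then have "k' \<ge> 1" "k' < k"
      using less.prems p_gt_1 by (auto intro!: Nat.gr0I)
    then obtain e where e: "v (of_nat k') = (1 / real p) ^ e" "p ^ e \<le> k'"
      using less.IH by blast
    then have "v (of_nat k) = (1 / real p) ^ Suc e \<and> p ^ Suc e \<le> k"
      using k' v_of_nat_p by (simp add: v_mult)
    then show ?thesis ..
  qed
qed

lemma v_inverse_of_nat_le: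
  assumes "k \<ge> 1"
  shows "v (1 / of_nat k) \<le> real k"
proof -
  obtain e where e: "v (of_nat k) = (1 / real p) ^ e" "p ^ e \<le> k"
    using v_of_nat_eq_power[OF assms] by blast
  then have "real p ^ e \<le> real k"
    by (metis of_nat_le_iff of_nat_power)
  then show ?thesis
    using e(1) by (simp add: v_divide power_one_over)
qed

lemma v_inverse_of_nat_le_powr:
  assumes "k \<ge> 1"
  shows "v (1 / of_nat k) \<le> real p powr ((real k - 1) / (real p - 1))"
proof -
  obtain e where e: "v (of_nat k) = (1 / real p) ^ e" "p ^ e \<le> k"
    using v_of_nat_eq_power[OF assms] by blast
  have p1: "real p > 1"
    using p_gt_1 by simp
  have "1 + real e * (real p - 1) \<le> (1 + (real p - 1)) ^ e"
    by (rule Bernoulli_inequality) (use p1 in simp)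
  also have "\<dots> \<le> real k"
    using e(2) by (simp flip: of_nat_power)
  finally have "real e \<le> (real k - 1) / (real p - 1)"
    using p1 by (simp add: field_simps)
  then have "real p powr real e \<le> real p powr ((real k - 1) / (real p - 1))"
    using p1 by (intro powr_mono) simp_all
  then show ?thesis
    using e(1) p1 by (simp add: v_divide power_one_over powr_realpow)
qed

lemma v_binomial_prime_power_le:
  assumes "i \<ge> 1"
  shows "v (of_nat (p ^ N choose i)) \<le> real i * (1 / real p) ^ N"
proof -
  have "i * (p ^ N choose i) = p ^ N * ((p ^ N - 1) choose (i - 1))"
    using assms by (intro times_binomial_minus1_eq) simp
  then have "v (of_nat i) * v (of_nat (p ^ N choose i))
      = (1 / real p) ^ N * v (of_nat ((p ^ N - 1) choose (i - 1)))"
    by (metis of_nat_mult v_mult v_of_nat_prime_power)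
  also have "\<dots> \<le> (1 / real p) ^ N"
    using v_of_nat_le_1 by (simp add: mult_left_le)
  finally have "v (of_nat (p ^ N choose i)) \<le> (1 / real p) ^ N / v (of_nat i)"
    using v_pos[of "of_nat i"] assms by (simp add: pos_le_divide_eq mult.commute)
  also have "\<dots> = (1 / real p) ^ N * (1 / v (of_nat i))"
    by simp
  also have "\<dots> \<le> (1 / real p) ^ N * real i"
    using v_inverse_of_nat_le[OF assms] by (intro mult_left_mono) (simp_all add: v_divide)
  finally show ?thesis
    by (simp add: mult.commute)
qed

lemma v_binomial_pred_prime_power_minus_le:
  "v (of_nat ((p ^ N - 1) choose j) - (- 1) ^ j) \<le> real j * (1 / real p) ^ N"
proof (induction j)
  case 0
  then show ?case by simp
next
  case (Suc j)
  obtain M where M: "p ^ N = Suc M"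
    using p_gt_1 by (cases "p ^ N") auto
  have eq: "of_nat ((p ^ N - 1) choose Suc j) - (- 1) ^ Suc j
      = of_nat (p ^ N choose Suc j) - (of_nat ((p ^ N - 1) choose j) - (- 1 :: 'a) ^ j)"
    unfolding M by simp
  have "v (of_nat ((p ^ N - 1) choose Suc j) - (- 1) ^ Suc j)
      \<le> max (v (of_nat (p ^ N choose Suc j))) (v (of_nat ((p ^ N - 1) choose j) - (- 1 :: 'a) ^ j))"
    unfolding eq by (rule v_diff_max)
  moreover have "v (of_nat (p ^ N choose Suc j) :: 'a) \<le> real (Suc j) * (1 / real p) ^ N"
    by (rule v_binomial_prime_power_le) simp
  moreover have "real j * (1 / real p) ^ N \<le> real (Suc j) * (1 / real p) ^ N"
    by (intro mult_right_mono) simp_all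
  ultimately show ?case
    using Suc.IH by linarith
qed

lemma vtends_of_nat_prime_power_power:
  assumes "j \<ge> 1"
  shows "vtends v (\<lambda>N. of_nat (p ^ N) ^ j) 0"
proof (rule vtends_dominated)
  show "(\<lambda>N. (1 / real p) ^ N) \<longlonglongrightarrow> 0"
    using p_gt_1 by (intro LIMSEQ_power_zero) simp
  have "((1 / real p) ^ N) ^ j \<le> ((1 / real p) ^ N) ^ 1" for N
    using p_gt_1 assms by (intro power_decreasing) (simp_all add: power_le_one)
  then show "eventually (\<lambda>N. v (of_nat (p ^ N) ^ j - 0) \<le> (1 / real p) ^ N) sequentially"
    by (simp add: v_power v_of_nat_prime_power del: of_nat_power)
qed

lemma has_q_integral_mult_left:
  assumes "has_q_integral p v q f I"
  shows "has_q_integral p v q (\<lambda>x. c * f x) (c * I)"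
  using vtends_mult[OF vtends_const assms[unfolded has_q_integral_def], of c]
  unfolding has_q_integral_def by (simp add: sum_distrib_left mult_ac)

lemma has_q_integral_sum:
  assumes "\<And>i. i \<in> A \<Longrightarrow> has_q_integral p v q (f i) (I i)"
  shows "has_q_integral p v q (\<lambda>x. \<Sum>i\<in>A. f i x) (\<Sum>i\<in>A. I i)"
proof -
  have swap: "(\<Sum>x<M. (\<Sum>i\<in>A. f i x) * q ^ x) = (\<Sum>i\<in>A. \<Sum>x<M. f i x * q ^ x)" for M
    unfolding sum_distrib_right by (rule sum.swap)
  have "vtends v (\<lambda>N. \<Sum>i\<in>A. 1 / qnum q (p ^ N) * (\<Sum>x<p ^ N. f i x * q ^ x)) (\<Sum>i\<in>A. I i)"
    using assms unfolding has_q_integral_def by (rule vtends_sum)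
  then show ?thesis
    unfolding has_q_integral_def swap sum_distrib_left .
qed

end

section \<open>The \<open>p\<close>-adic logarithm and the moments\<close>

lemma power_minus_1_div_eq_sum:
  fixes x :: "'a::field_char_0"
  assumes "M \<ge> 1"
  shows "(x ^ M - 1) / of_nat M
           = (\<Sum>k=1..M. of_nat ((M - 1) choose (k - 1)) * (x - 1) ^ k / of_nat k)"
proof -
  have "x ^ M = ((x - 1) + 1) ^ M"
    by simp
  also have "\<dots> = (\<Sum>k\<le>M. of_nat (M choose k) * (x - 1) ^ k * 1 ^ (M - k))"
    by (rule binomial_ring)
  also have "\<dots> = (\<Sum>k=0..M. of_nat (M choose k) * (x - 1) ^ k)"
    by (simp add: atMost_atLeast0)
  also have "\<dots> = 1 + (\<Sum>k=1..M. of_nat (M choose k) * (x - 1) ^ k)"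
    by (subst sum.atLeast_Suc_atMost) simp_all
  finally have "(x ^ M - 1) / of_nat M = (\<Sum>k=1..M. of_nat (M choose k) * (x - 1) ^ k / of_nat M)"
    by (simp add: sum_divide_distrib)
  also have "\<dots> = (\<Sum>k=1..M. of_nat ((M - 1) choose (k - 1)) * (x - 1) ^ k / of_nat k)"
  proof (rule sum.cong)
    fix k
    assume k: "k \<in> {1..M}"
    then have "k * (M choose k) = M * ((M - 1) choose (k - 1))"
      by (intro times_binomial_minus1_eq) simp
    then have "of_nat k * of_nat (M choose k) = (of_nat M * of_nat ((M - 1) choose (k - 1)) :: 'a)"
      by (metis of_nat_mult)
    moreover have "k \<noteq> 0" "M \<noteq> 0"
      using k by auto
    ultimately show "of_nat (M choose k) * (x - 1) ^ k / of_nat M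
        = of_nat ((M - 1) choose (k - 1)) * (x - 1) ^ k / of_nat k"
      by (simp add: field_simps)
  qed simp
  finally show ?thesis .
qed

lemma eventually_mult_power_less:
  fixes x c e :: real
  assumes "0 \<le> x" and "x < 1" and "0 < e"
  shows "eventually (\<lambda>n. c * x ^ n < e) sequentially"
proof -
  have "(\<lambda>n. c * x ^ n) \<longlonglongrightarrow> c * 0"
    using assms by (intro tendsto_mult tendsto_const LIMSEQ_power_zero) simp
  then show ?thesis
    using assms(3) by (intro order_tendstoD(2)) simp_all
qed

locale padic_log = padic_abs v p for v :: "'a::field_char_0 \<Rightarrow> real" and p +
  fixes q :: 'a
  assumes complete: "vcauchy v s \<Longrightarrow> \<exists>L. vtends v s L"
    and q_ne_1: "q \<noteq> 1"
    and v_1_minus_q_less: "v (1 - q) < real p powr (- 1 / (real p - 1))"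
begin

definition rho :: real where "rho = v (q - 1)"

text \<open>The \<open>k\<close>-th term of the logarithm series is bounded by \<open>rho * ratio ^ (k - 1)\<close>, and the
  hypothesis on \<open>q\<close> says precisely that \<open>ratio < 1\<close>.\<close>

definition ratio :: real where "ratio = rho * real p powr (1 / (real p - 1))"

definition log_partial :: "nat \<Rightarrow> 'a" where
  "log_partial N = (\<Sum>k=1..N. (-1)^(k+1) * (q - 1)^k / of_nat k)"

lemma rho_pos: "0 < rho"
  unfolding rho_def using q_ne_1 by (simp add: v_pos)

lemma ratio_nonneg: "0 \<le> ratio"
  unfolding ratio_def using rho_pos by simp

lemma ratio_less_1: "ratio < 1"
proof -
  have "real p powr (- 1 / (real p - 1)) = inverse (real p powr (1 / (real p - 1)))"
    by (simp add: powr_minus[symmetric])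
  then have "rho < inverse (real p powr (1 / (real p - 1)))"
    using v_1_minus_q_less v_minus_commute[of 1 q] unfolding rho_def by simp
  then show ?thesis
    unfolding ratio_def using p_gt_1 by (simp add: field_simps)
qed

lemma rho_ratio_power_antimono: "m \<le> n \<Longrightarrow> rho * ratio ^ n \<le> rho * ratio ^ m"
  using ratio_nonneg ratio_less_1 rho_pos by (intro mult_left_mono power_decreasing) simp_all

lemma v_log_term_le:
  assumes k: "k \<ge> 1" and c: "v c \<le> 1"
  shows "v (c * (q - 1) ^ k / of_nat k) \<le> rho * ratio ^ (k - 1)"
proof -
  have powr_eq: "real p powr ((real k - 1) / (real p - 1)) = (real p powr (1 / (real p - 1))) ^ (k - 1)"
    using k p_gt_1 by (simp add: powr_realpow[symmetric] powr_powr of_nat_diff)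
  have "v (c * (q - 1) ^ k / of_nat k) = v c * rho ^ k * v (1 / of_nat k)"
    by (simp add: v_mult v_power v_divide rho_def)
  also have "\<dots> \<le> 1 * rho ^ k * (real p powr (1 / (real p - 1))) ^ (k - 1)"
    using v_inverse_of_nat_le_powr[OF k] c rho_pos v_nonneg unfolding powr_eq
    by (intro mult_mono) simp_all
  also have "\<dots> = rho * ratio ^ (k - 1)"
    using k unfolding ratio_def by (cases k) (simp_all add: power_mult_distrib)
  finally show ?thesis .
qed

lemma v_log_partial_diff_le:
  assumes "n \<le> m"
  shows "v (log_partial m - log_partial n) \<le> rho * ratio ^ n"
proof -
  have "{1..m} - {1..n} = {Suc n..m}"
    by auto
  then have "log_partial m - log_partial n = (\<Sum>k=Suc n..m. (-1)^(k+1) * (q - 1)^k / of_nat k)"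
    unfolding log_partial_def using assms by (subst sum_diff[symmetric]) auto
  also have "v \<dots> \<le> rho * ratio ^ n"
  proof (rule v_sum_le)
    fix k assume "k \<in> {Suc n..m}"
    then have "k \<ge> 1" "n \<le> k - 1"
      by auto
    then show "v ((-1)^(k+1) * (q - 1)^k / of_nat k) \<le> rho * ratio ^ n"
      using order_trans[OF v_log_term_le rho_ratio_power_antimono] by (simp add: v_power)
  qed (use rho_pos ratio_nonneg in simp)
  finally show ?thesis .
qed

lemma vcauchy_log_partial: "vcauchy v log_partial"
  unfolding vcauchy_def
proof (intro allI impI)
  fix e :: real
  assume "e > 0"
  then obtain N where N: "\<forall>n\<ge>N. rho * ratio ^ n < e"
    using eventually_mult_power_less[OF ratio_nonneg ratio_less_1] unfolding eventually_sequentially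
    by blast
  have "v (log_partial m - log_partial n) < e" if "N \<le> m" "N \<le> n" for m n
    using v_log_partial_diff_le[of n m] v_log_partial_diff_le[of m n] N that
      v_minus_commute[of "log_partial m"]
    by (cases "n \<le> m") (fastforce intro: le_less_trans)+
  then show "\<exists>N. \<forall>m\<ge>N. \<forall>n\<ge>N. v (log_partial m - log_partial n) < e"
    by blast
qed

lemma vtends_log_partial: "vtends v log_partial (plog v q)"
proof -
  obtain L where L: "vtends v log_partial L"
    using complete[OF vcauchy_log_partial] by blast
  have "plog v q = L"
    unfolding plog_def log_partial_def[abs_def, symmetric]
    using L vtends_unique by blast
  then show ?thesis
    using L by simp
qed

lemma v_plog_minus_le: "v (plog v q - (q - 1)) \<le> rho * ratio"
proof (rule vtends_imp_v_diff_le[OF vtends_log_partial])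
  have "v (log_partial n - log_partial 1) \<le> rho * ratio" if "n \<ge> 1" for n
    using v_log_partial_diff_le[OF that] by simp
  then show "eventually (\<lambda>n. v (log_partial n - (q - 1)) \<le> rho * ratio) sequentially"
    unfolding eventually_sequentially by (auto simp: log_partial_def)
qed

lemma plog_ne_0: "plog v q \<noteq> 0"
proof
  assume "plog v q = 0"
  then have "rho \<le> rho * ratio"
    using v_plog_minus_le v_minus_commute[of q 1] unfolding rho_def by simp
  then show False
    using rho_pos ratio_less_1 by simp
qed

lemma qpower_quotient_minus_log_partial:
  "(q ^ p ^ N - 1) / of_nat (p ^ N) - log_partial (p ^ N)
     = (\<Sum>k=1..p^N. (of_nat ((p ^ N - 1) choose (k - 1)) - (- 1) ^ (k - 1)) * (q - 1) ^ k / of_nat k)"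
proof -
  have "p ^ N \<ge> 1"
    using p_gt_1 by simp
  have "(q ^ p ^ N - 1) / of_nat (p ^ N) - log_partial (p ^ N)
      = (\<Sum>k=1..p^N. of_nat ((p ^ N - 1) choose (k - 1)) * (q - 1) ^ k / of_nat k
           - (-1)^(k+1) * (q - 1)^k / of_nat k)"
    unfolding power_minus_1_div_eq_sum[OF \<open>p ^ N \<ge> 1\<close>] log_partial_def
    by (rule sum_subtractf[symmetric])
  also have "\<dots> = (\<Sum>k=1..p^N. (of_nat ((p ^ N - 1) choose (k - 1)) - (- 1) ^ (k - 1))
                      * (q - 1) ^ k / of_nat k)"
  proof (rule sum.cong)
    fix k
    assume "k \<in> {1..p^N}"
    then have "(- 1 :: 'a) ^ (k + 1) = (- 1) ^ (k - 1)"
      by (cases k) simp_all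
    then show "of_nat ((p ^ N - 1) choose (k - 1)) * (q - 1) ^ k / of_nat k - (-1)^(k+1) * (q - 1)^k / of_nat k
        = (of_nat ((p ^ N - 1) choose (k - 1)) - (- 1) ^ (k - 1)) * (q - 1) ^ k / of_nat k"
      by (simp add: left_diff_distrib diff_divide_distrib)
  qed simp
  finally show ?thesis .
qed

text \<open>Split the sum at \<open>k = K\<close>: the tail is small because \<open>ratio < 1\<close>, the head because the
  coefficients \<open>(p\<^sup>N - 1 choose k - 1)\<close> are \<open>p\<close>-adically close to \<open>(-1)\<^sup>k\<^sup>-\<^sup>1\<close>.\<close>

lemma v_qpower_quotient_minus_log_partial_le:
  "v ((q ^ p ^ N - 1) / of_nat (p ^ N) - log_partial (p ^ N))
     \<le> max (rho * ratio ^ K) (real K * rho * (1 / real p) ^ N)"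
  unfolding qpower_quotient_minus_log_partial
proof (rule v_sum_le)
  fix k
  assume "k \<in> {1..p^N}"
  then have k: "k \<ge> 1"
    by simp
  let ?c = "of_nat ((p ^ N - 1) choose (k - 1)) - (- 1 :: 'a) ^ (k - 1)"
  have "v (?c * (q - 1) ^ k / of_nat k) = v ?c * v (1 * (q - 1) ^ k / of_nat k)"
    by (simp add: v_mult[symmetric])
  also have "\<dots> \<le> v ?c * (rho * ratio ^ (k - 1))"
    using v_log_term_le[OF k, of 1] v_nonneg by (intro mult_left_mono) simp_all
  also have "\<dots> \<le> max (rho * ratio ^ K) (real K * rho * (1 / real p) ^ N)"
  proof (cases "K \<le> k - 1")
    case True
    have "v ?c \<le> 1"
      using v_diff_max[of "of_nat ((p ^ N - 1) choose (k - 1))" "(- 1) ^ (k - 1)"] v_of_nat_le_1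
      by (simp add: v_power)
    then have "v ?c * (rho * ratio ^ (k - 1)) \<le> 1 * (rho * ratio ^ K)"
      using rho_ratio_power_antimono[OF True] rho_pos ratio_nonneg by (intro mult_mono) simp_all
    then show ?thesis
      by simp
  next
    case False
    have "real (k - 1) * (1 / real p) ^ N \<le> real K * (1 / real p) ^ N"
      using False by (intro mult_right_mono) simp_all
    then have "v ?c \<le> real K * (1 / real p) ^ N"
      using v_binomial_pred_prime_power_minus_le[of N "k - 1"] by linarith
    moreover have "rho * ratio ^ (k - 1) \<le> rho"
      using rho_ratio_power_antimono[of 0 "k - 1"] by simp
    ultimately have "v ?c * (rho * ratio ^ (k - 1)) \<le> real K * (1 / real p) ^ N * rho"
      using rho_pos ratio_nonneg v_nonneg by (intro mult_mono) simp_all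
    then show ?thesis
      by (simp add: mult_ac)
  qed
  finally show "v (?c * (q - 1) ^ k / of_nat k) \<le> max (rho * ratio ^ K) (real K * rho * (1 / real p) ^ N)" .
qed (use rho_pos ratio_nonneg in \<open>simp add: le_max_iff_disj\<close>)

lemma vtends_qpower_quotient: "vtends v (\<lambda>N. (q ^ p ^ N - 1) / of_nat (p ^ N)) (plog v q)"
  unfolding vtends_iff_eventually
proof (intro allI impI)
  fix e :: real
  assume e: "e > 0"
  obtain K where K: "rho * ratio ^ K < e"
    using eventually_mult_power_less[OF ratio_nonneg ratio_less_1 e, of rho]
    unfolding eventually_sequentially by blast
  have "eventually (\<lambda>N. real K * rho * (1 / real p) ^ N < e) sequentially"
    using p_gt_1 e by (intro eventually_mult_power_less) simp_all
  moreover obtain N1 where N1: "\<And>n. n \<ge> N1 \<Longrightarrow> v (log_partial n - plog v q) < e"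
    using vtends_log_partial e unfolding vtends_def by blast
  have "N \<le> p ^ N" for N
    using less_exp[of N] power_mono[of 2 p N] p_gt_1 by simp
  then have "v (log_partial (p ^ N) - plog v q) < e" if "N \<ge> N1" for N
    using N1 le_trans[OF that] by blast
  then have "eventually (\<lambda>N. v (log_partial (p ^ N) - plog v q) < e) sequentially"
    unfolding eventually_sequentially by blast
  ultimately show "eventually (\<lambda>N. v ((q ^ p ^ N - 1) / of_nat (p ^ N) - plog v q) < e) sequentially"
  proof eventually_elim
    case (elim N)
    let ?T = "(q ^ p ^ N - 1) / of_nat (p ^ N)"
    have "v (?T - plog v q) \<le> max (v (?T - log_partial (p ^ N))) (v (log_partial (p ^ N) - plog v q))"
      using v_add_max[of "?T - log_partial (p ^ N)" "log_partial (p ^ N) - plog v q"] by simp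
    then show ?case
      using v_qpower_quotient_minus_log_partial_le[of N K] K elim by linarith
  qed
qed

lemma vtends_q_power_prime_power: "vtends v (\<lambda>N. q ^ p ^ N) 1"
proof -
  have "vtends v (\<lambda>N. 1 + of_nat (p ^ N) ^ 1 * ((q ^ p ^ N - 1) / of_nat (p ^ N))) (1 + 0 * plog v q)"
    by (intro vtends_add vtends_mult vtends_const vtends_of_nat_prime_power_power vtends_qpower_quotient) simp
  then show ?thesis
    using p_gt_1 by simp
qed

lemma eventually_q_power_prime_power_ne_1: "eventually (\<lambda>N. q ^ p ^ N \<noteq> 1) sequentially"
  using vtends_eventually_ne_0[OF vtends_qpower_quotient plog_ne_0] by eventually_elim simp

lemma vtends_prime_power_div_q_power:
  "vtends v (\<lambda>N. of_nat (p ^ N) / (q ^ p ^ N - 1)) (inverse (plog v q))"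
  using vtends_inverse[OF vtends_qpower_quotient plog_ne_0] by simp

definition qint_kernel_limit :: "'a fps" where
  "qint_kernel_limit = 1 + fps_const (inverse (plog v q)) * fps_X"

lemma vtends_qint_kernel_nth:
  "vtends v (\<lambda>N. fps_nth (qint_kernel q (p ^ N)) j) (fps_nth qint_kernel_limit j)"
proof (cases j)
  case 0
  have "eventually (\<lambda>N. fps_nth (qint_kernel q (p ^ N)) 0 = 1) sequentially"
    using eventually_q_power_prime_power_ne_1 by eventually_elim (rule qint_kernel_nth_0)
  then show ?thesis
    unfolding 0 qint_kernel_limit_def by (rule vtends_eventually_eq) (simp add: vtends_const)
next
  case (Suc i)
  have "vtends v (\<lambda>N. of_nat (p ^ N) ^ i) (if i = 0 then 1 else 0)"
    using vtends_of_nat_prime_power_power[of i] by (cases i) (simp_all add: vtends_const)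
  then have "vtends v (\<lambda>N. q ^ p ^ N * (of_nat (p ^ N) / (q ^ p ^ N - 1))
                         * (of_nat (p ^ N) ^ i * inverse (fact (Suc i))))
      (1 * inverse (plog v q) * ((if i = 0 then 1 else 0) * inverse (fact (Suc i))))"
    by (intro vtends_mult vtends_q_power_prime_power vtends_prime_power_div_q_power vtends_const)
  moreover have "fps_nth qint_kernel_limit (Suc i)
      = 1 * inverse (plog v q) * ((if i = 0 then 1 else 0) * inverse (fact (Suc i)))"
    by (cases i) (simp_all add: qint_kernel_limit_def)
  ultimately show ?thesis
    unfolding Suc qint_kernel_nth_Suc by (simp only:)
qed

lemma qBernoulli_gf_eq:
  "qBernoulli_gf v q = qint_kernel_limit * (fps_const (q - 1) / (fps_const q * fps_exp 1 - 1))"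
proof -
  have "fps_nth (fps_const q * fps_exp 1 - 1) 0 \<noteq> 0"
    using q_ne_1 by simp
  moreover have "fps_const (q - 1) + fps_const ((q - 1) / plog v q) * fps_X
      = qint_kernel_limit * fps_const (q - 1)"
  proof -
    have "fps_const ((q - 1) / plog v q) = fps_const (inverse (plog v q)) * fps_const (q - 1)"
      by (simp add: divide_inverse mult.commute)
    then show ?thesis
      unfolding qint_kernel_limit_def by (simp only: distrib_left distrib_right mult_1_left mult_1_right mult_ac)
  qed
  ultimately show ?thesis
    unfolding qBernoulli_gf_def by (simp add: fps_divide_unit mult.assoc)
qed

lemma has_q_integral_power: "has_q_integral p v q (\<lambda>x. of_nat x ^ m) (qBernoulli v q m)"
  unfolding has_q_integral_def qint_sum_power_eq_fps_nth[OF q_ne_1] qBernoulli_def qBernoulli_gf_eq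
  by (intro vtends_mult vtends_const vtends_fps_nth_mult vtends_qint_kernel_nth)

lemma has_q_integral_gchoose_half:
  "has_q_integral p v q (\<lambda>x. (of_nat x / 2) gchoose n)
     ((1 / fact n) * (\<Sum>m=0..n. (1/2) ^ m * qBernoulli v q m * of_int (Stirling1 n m)))"
proof -
  define c :: "nat \<Rightarrow> 'a" where "c m = of_int (Stirling1 n m) * (1/2) ^ m / fact n" for m
  have integral: "has_q_integral p v q (\<lambda>x. \<Sum>m=0..n. c m * of_nat x ^ m) (\<Sum>m=0..n. c m * qBernoulli v q m)"
    by (intro has_q_integral_sum has_q_integral_mult_left has_q_integral_power)
  have integrand: "(\<lambda>x. (of_nat x / 2) gchoose n) = (\<lambda>x. \<Sum>m=0..n. c m * of_nat x ^ m)"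
    unfolding gbinomial_eq_sum_Stirling1 c_def by (simp add: sum_divide_distrib power_divide)
  have integral_eq: "(\<Sum>m=0..n. c m * qBernoulli v q m)
      = (1 / fact n) * (\<Sum>m=0..n. (1/2) ^ m * qBernoulli v q m * of_int (Stirling1 n m))"
    unfolding c_def sum_distrib_left by (simp add: mult_ac)
  show ?thesis
    unfolding integrand integral_eq[symmetric] by (rule integral)
qed

end

theorem corollary3:
  fixes p :: nat and v :: "'a::field_char_0 \<Rightarrow> real" and q :: 'a and n :: nat
  assumes "prime p" and "odd p"
    and "is_Cp p v"
    and "v (1 - q) < real p powr (- 1 / (real p - 1))"
    and "q \<noteq> 1"
  shows "has_q_integral p v q (\<lambda>x. (of_nat x / 2) gchoose n)
           ((-1) ^ n * (1 / 2 ^ (2 * n)) * dq v q n)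
       \<and> (-1) ^ n * (1 / 2 ^ (2 * n)) * dq v q n
           = (1 / fact n) * (\<Sum>m=0..n. (1/2) ^ m * qBernoulli v q m * of_int (Stirling1 n m))"
proof -
  interpret padic_log v p q
    using assms by unfold_locales (auto simp: is_Cp_def)
  show ?thesis
    unfolding dq_scaled_eq_sum_qBernoulli_Stirling1[OF \<open>q \<noteq> 1\<close>]
    using has_q_integral_gchoose_half by simp
qed

end
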